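(* For every $i\in\mathbb N$, the subgroup $G_i^\infty=\langle a_i,a_{i+1},\dots\rangle$ of $G'$ is undistorted: for every element of $G_i^\infty$, its word length with respect to $\{a_i,a_{i+1},\dots\}$ equals its word length in $G'$ with respect to $\{a_0,a_1,\dots\}$.
   Context: Fix an integer $p\ge20$. $G'=\langle a_0,a_1,a_2,\dots\mid a_j^{-1}a_{j-1}a_j=a_{j-1}^p\ (j\ge1)\rangle$, with word metric relative to $\{a_0,a_1,\dots\}$. *)

theory Defs
  imports Main
begin

text \<open>Letters of the free group on generators a_0, a_1, ...:
  (False, n) stands for a_n and (True, n) stands for a_n^{-1}.\<close>
type_synonym letter = "bool \<times> nat"

definition inv_letter :: "letter \<Rightarrow> letter" where
  "inv_letter x = (\<not> fst x, snd x)"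

definition relator :: "nat \<Rightarrow> nat \<Rightarrow> letter list" where
  "relator p j = [(True, j), (False, j - 1), (False, j)] @ replicate p (True, j - 1)"

text \<open>Two words represent the same element of
  G' = < a_0, a_1, ... | a_j^{-1} a_{j-1} a_j = a_{j-1}^p (j \<ge> 1) >:
  the congruence generated by free cancellation and the relators.\<close>
inductive geq :: "nat \<Rightarrow> letter list \<Rightarrow> letter list \<Rightarrow> bool" for p where
  geq_refl: "geq p u u"
| geq_sym: "geq p u v \<Longrightarrow> geq p v u"
| geq_trans: "geq p u v \<Longrightarrow> geq p v w \<Longrightarrow> geq p u w"
| geq_cancel: "geq p (u @ [x, inv_letter x] @ v) (u @ v)"
| geq_rel: "1 \<le> j \<Longrightarrow> geq p (u @ relator p j @ v) (u @ v)"

definition wlen :: "nat \<Rightarrow> nat set \<Rightarrow> letter list \<Rightarrow> nat" where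
  "wlen p S w = (LEAST n. \<exists>v. snd ` set v \<subseteq> S \<and> length v = n \<and> geq p v w)"

end

theory Submission
  imports Defs
begin

(* Let r_i be the map on words that deletes every letter a_n^{\<pm>1}
   with n < i.  It sends the relator of index j to the empty word (j < i), to
   the freely cancelling pair a_i^{-1} a_i (j = i), or to itself (j > i), so r_i
   preserves equality in G' and induces a retraction of G' onto the subgroup
   G_i^\<infinity>.  Since r_i never lengthens a word, fixes words in a_i, a_{i+1}, ...,
   and only produces such words, a geodesic representative v of an element of
   G_i^\<infinity> over all generators yields the representative r_i v over
   {a_i, a_{i+1}, ...} that is at most as long.  The reverse inequality holds
   because enlarging the generating set can only shorten words. *)

definition erase_below :: "nat \<Rightarrow> letter list \<Rightarrow> letter list" where
  "erase_below i = filter (\<lambda>x. i \<le> snd x)"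

lemma erase_below_append [simp]:
  "erase_below i (u @ v) = erase_below i u @ erase_below i v"
  by (simp add: erase_below_def)

lemma erase_below_length: "length (erase_below i w) \<le> length w"
  by (simp add: erase_below_def)

lemma erase_below_range: "snd ` set (erase_below i w) \<subseteq> {i..}"
  by (auto simp: erase_below_def)

lemma erase_below_id: "snd ` set w \<subseteq> {i..} \<Longrightarrow> erase_below i w = w"
  by (auto simp: erase_below_def intro!: filter_True)

text \<open>The image of a relator is again trivial in G': it disappears entirely,
  becomes a cancelling pair, or is left untouched.\<close>
lemma geq_erase_below_relator:
  assumes "1 \<le> j"
  shows "geq p (erase_below i (u @ relator p j @ v)) (erase_below i (u @ v))"
proof -
  consider "j < i" | "j = i" | "i < j" by linarith
  then show ?thesis
  proof cases
    case 1
    then have "erase_below i (relator p j) = []"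
      by (auto simp: erase_below_def relator_def)
    then show ?thesis by (simp add: geq_refl)
  next
    case 2
    then have "erase_below i (relator p j) = [(True, i), inv_letter (True, i)]"
      using assms by (auto simp: erase_below_def relator_def inv_letter_def)
    then show ?thesis
      using geq_cancel[of p "erase_below i u" "(True, i)" "erase_below i v"] by simp
  next
    case 3
    then have "erase_below i (relator p j) = relator p j"
      by (auto simp: erase_below_def relator_def)
    then show ?thesis
      using geq_rel[OF assms, of p "erase_below i u" "erase_below i v"] by simp
  qed
qed

lemma geq_erase_below: "geq p u v \<Longrightarrow> geq p (erase_below i u) (erase_below i v)"
proof (induction rule: geq.induct)
  case (geq_refl u)
  show ?case by (rule geq.geq_refl)
next
  case (geq_sym u v)
  then show ?case by (blast intro: geq.geq_sym)
next
  case (geq_trans u v w)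
  then show ?case by (blast intro: geq.geq_trans)
next
  case (geq_cancel u x v)
  show ?case
  proof (cases "i \<le> snd x")
    case True
    then show ?thesis
      using geq.geq_cancel[of p "erase_below i u" x "erase_below i v"]
      by (simp add: erase_below_def inv_letter_def)
  next
    case False
    then show ?thesis by (simp add: erase_below_def inv_letter_def geq.geq_refl)
  qed
next
  case (geq_rel j u v)
  then show ?case by (rule geq_erase_below_relator)
qed

lemma wlen_le:
  assumes "snd ` set v \<subseteq> S" and "geq p v w"
  shows "wlen p S w \<le> length v"
  unfolding wlen_def using assms by (intro Least_le) blast

lemma wlen_attained:
  assumes "snd ` set w \<subseteq> S"
  obtains v where "snd ` set v \<subseteq> S" "length v = wlen p S w" "geq p v w"
proof -
  have "\<exists>v. snd ` set v \<subseteq> S \<and> length v = length w \<and> geq p v w"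
    using assms geq_refl by blast
  then show ?thesis
    using that LeastI_ex[of "\<lambda>n. \<exists>v. snd ` set v \<subseteq> S \<and> length v = n \<and> geq p v w"]
    unfolding wlen_def by blast
qed

lemma wlen_mono:
  assumes "S \<subseteq> T" and "snd ` set w \<subseteq> S"
  shows "wlen p T w \<le> wlen p S w"
proof -
  obtain v where "snd ` set v \<subseteq> S" "length v = wlen p S w" "geq p v w"
    using wlen_attained[OF assms(2)] .
  with assms(1) show ?thesis using wlen_le[of v T p w] by auto
qed

theorem corollary5p3:
  fixes p i :: nat and w :: "letter list"
  assumes "p \<ge> 20"
    and "snd ` set w \<subseteq> {i..}"
  shows "wlen p {i..} w = wlen p UNIV w"
proof -
  obtain v where v: "length v = wlen p UNIV w" "geq p v w"
    using wlen_attained[of w UNIV p] by blast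
  have "geq p (erase_below i v) w"
    using geq_erase_below[OF v(2), of i] erase_below_id[OF assms(2)] by simp
  then have "wlen p {i..} w \<le> length (erase_below i v)"
    using wlen_le erase_below_range by blast
  also have "\<dots> \<le> wlen p UNIV w"
    using erase_below_length v(1) by metis
  finally show ?thesis
    using wlen_mono[OF subset_UNIV assms(2), of p] by simp
qed

end
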